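(* There exists $C>0$ such that for infinitely many positive integers $n$, there is a graph $G$ on $n$ vertices with $\alpha(G)\le 3$ such that every clique cover of $G$ has size at least $Cn^{6/5}/(\log n)^2$.
   Context: All graphs are finite and simple. $\alpha(G)$ denotes the maximum size of a stable (independent) set in $G$. A clique $X$ of $G$ covers an edge $uv$ if $u,v\in X$; a clique cover of $G$ is a collection of cliques of $G$ that together cover all edges of $G$, and its size is the number of cliques in it. Logarithms are to base two. *)

theory Defs
  imports Complex_Main
begin

definition simple_graph :: "'a set \<Rightarrow> 'a set set \<Rightarrow> bool" where
  "simple_graph V E \<longleftrightarrow> finite V \<and> (\<forall>e\<in>E. e \<subseteq> V \<and> card e = 2)"

definition is_clique :: "'a set \<Rightarrow> 'a set set \<Rightarrow> 'a set \<Rightarrow> bool" where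
  "is_clique V E X \<longleftrightarrow> X \<subseteq> V \<and> (\<forall>u\<in>X. \<forall>v\<in>X. u \<noteq> v \<longrightarrow> {u, v} \<in> E)"

definition is_stable :: "'a set \<Rightarrow> 'a set set \<Rightarrow> 'a set \<Rightarrow> bool" where
  "is_stable V E S \<longleftrightarrow> S \<subseteq> V \<and> (\<forall>u\<in>S. \<forall>v\<in>S. {u, v} \<notin> E)"

definition alpha :: "'a set \<Rightarrow> 'a set set \<Rightarrow> nat" where
  "alpha V E = Max {card S | S. is_stable V E S}"

definition is_clique_cover :: "'a set \<Rightarrow> 'a set set \<Rightarrow> 'a set set \<Rightarrow> bool" where
  "is_clique_cover V E \<C> \<longleftrightarrow> finite \<C> \<and> (\<forall>X\<in>\<C>. is_clique V E X) \<and>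
     (\<forall>e\<in>E. \<exists>X\<in>\<C>. e \<subseteq> X)"

end

theory Submission
  imports Defs
begin

text \<open>Let \<open>G\<close> be the random graph on \<open>n\<close> vertices in which each pair is an edge
  independently with probability \<open>1 - 1/(2 n\<^bsup>2/5\<^esup>)\<close>. The Lovasz Local Lemma shows that with
  positive probability \<open>G\<close> has no independent 4-set and no clique on
  \<open>k \<approx> 16 n\<^bsup>2/5\<^esup> ln n\<close> vertices. Then every 4-set contains an edge, which lies in some clique
  \<open>X\<close> of a given clique cover, so the 4-set meets \<open>X\<close> in two vertices. As \<open>|X| < k\<close>, at most
  \<open>k\<^sup>2 n\<^sup>2\<close> 4-sets meet \<open>X\<close> in two vertices, so the cover has at least
  \<open>C(n,4) / (k\<^sup>2 n\<^sup>2) \<ge> c n\<^bsup>6/5\<^esup> / (log n)\<^sup>2\<close> cliques.\<close>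

section \<open>Random subsets of a finite set\<close>

text \<open>\<open>subset_prob q D A\<close> is the probability that a random subset of the finite set \<open>D\<close>,
  containing each element independently with probability \<open>q\<close>, lies in \<open>A\<close>.\<close>

definition subset_weight :: "real \<Rightarrow> 'a set \<Rightarrow> 'a set \<Rightarrow> real" where
  "subset_weight q D H = (\<Prod>e\<in>D. if e \<in> H then q else 1 - q)"

definition subset_prob :: "real \<Rightarrow> 'a set \<Rightarrow> 'a set set \<Rightarrow> real" where
  "subset_prob q D A = (\<Sum>H\<in>Pow D. if H \<in> A then subset_weight q D H else 0)"

lemma subset_weight_nonneg: "0 \<le> q \<Longrightarrow> q \<le> 1 \<Longrightarrow> 0 \<le> subset_weight q D H"
  unfolding subset_weight_def by (intro prod_nonneg) auto

lemma subset_prob_nonneg: "0 \<le> q \<Longrightarrow> q \<le> 1 \<Longrightarrow> 0 \<le> subset_prob q D A"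
  unfolding subset_prob_def by (intro sum_nonneg) (auto intro: subset_weight_nonneg)

lemma subset_prob_mono: "0 \<le> q \<Longrightarrow> q \<le> 1 \<Longrightarrow> A \<subseteq> B \<Longrightarrow> subset_prob q D A \<le> subset_prob q D B"
  unfolding subset_prob_def by (intro sum_mono) (auto intro: subset_weight_nonneg)

lemma subset_prob_Diff: "subset_prob q D (A - B) = subset_prob q D A - subset_prob q D (A \<inter> B)"
  unfolding subset_prob_def by (simp add: sum_subtractf[symmetric]) (intro sum.cong, auto)

lemma subset_prob_pos_imp_ex:
  assumes "subset_prob q D A > 0" shows "\<exists>H \<subseteq> D. H \<in> A"
proof (rule ccontr)
  assume "\<not> ?thesis"
  then have "subset_prob q D A = 0" unfolding subset_prob_def by (intro sum.neutral) auto
  with assms show False by simp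
qed

lemma subset_weight_eq:
  assumes "finite D" "H \<subseteq> D"
  shows "subset_weight q D H = q ^ card H * (1 - q) ^ card (D - H)"
proof -
  have "subset_weight q D H =
      (\<Prod>e\<in>D - H. if e \<in> H then q else 1 - q) * (\<Prod>e\<in>H. if e \<in> H then q else 1 - q)"
    unfolding subset_weight_def by (rule prod.subset_diff[OF assms(2,1)])
  then show ?thesis by simp
qed

lemma subset_prob_UNIV: assumes "finite D" shows "subset_prob q D UNIV = 1"
proof -
  have "(1::real) = (\<Prod>e\<in>D. q + (1 - q))" by simp
  also have "\<dots> = (\<Sum>H\<in>Pow D. (\<Prod>e\<in>H. q) * (\<Prod>e\<in>D - H. 1 - q))"
    by (rule prod_add[OF assms])
  also have "\<dots> = subset_prob q D UNIV"
    unfolding subset_prob_def using subset_weight_eq[OF assms] by (intro sum.cong) auto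
  finally show ?thesis by simp
qed

lemma subset_weight_Un:
  assumes "finite D" "D1 \<subseteq> D" "U \<subseteq> D1" "W \<subseteq> D - D1"
  shows "subset_weight q D (U \<union> W) = subset_weight q D1 U * subset_weight q (D - D1) W"
proof -
  have "subset_weight q D (U \<union> W) = (\<Prod>e\<in>D1. if e \<in> U \<union> W then q else 1 - q) *
      (\<Prod>e\<in>D - D1. if e \<in> U \<union> W then q else 1 - q)"
    unfolding subset_weight_def using assms prod.subset_diff[of D1 D] by (simp add: mult.commute)
  also have "(\<Prod>e\<in>D1. if e \<in> U \<union> W then q else 1 - q) = subset_weight q D1 U"
    unfolding subset_weight_def using assms by (intro prod.cong) auto
  also have "(\<Prod>e\<in>D - D1. if e \<in> U \<union> W then q else 1 - q) = subset_weight q (D - D1) W"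
    unfolding subset_weight_def using assms by (intro prod.cong) auto
  finally show ?thesis .
qed

lemma Pow_split_bij:
  assumes "D1 \<subseteq> D"
  shows "bij_betw (\<lambda>x. fst x \<union> snd x) (Pow D1 \<times> Pow (D - D1)) (Pow D)"
proof (rule bij_betw_imageI)
  show "inj_on (\<lambda>x. fst x \<union> snd x) (Pow D1 \<times> Pow (D - D1))"
    by (auto simp: inj_on_def)
  have "H \<in> (\<lambda>x. fst x \<union> snd x) ` (Pow D1 \<times> Pow (D - D1))" if "H \<subseteq> D" for H
    using that by (intro image_eqI[of _ _ "(H \<inter> D1, H \<inter> (D - D1))"]) auto
  then show "(\<lambda>x. fst x \<union> snd x) ` (Pow D1 \<times> Pow (D - D1)) = Pow D"
    using assms by auto
qed

lemma subset_prob_Int_split: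
  assumes "finite D" "D1 \<subseteq> D"
    and A: "\<And>H. H \<subseteq> D \<Longrightarrow> H \<in> A \<longleftrightarrow> H \<inter> D1 \<in> A"
    and B: "\<And>H. H \<subseteq> D \<Longrightarrow> H \<in> B \<longleftrightarrow> H \<inter> (D - D1) \<in> B"
  shows "subset_prob q D (A \<inter> B) = subset_prob q D1 A * subset_prob q (D - D1) B"
proof -
  have "subset_prob q D (A \<inter> B) =
      (\<Sum>(U, W)\<in>Pow D1 \<times> Pow (D - D1). if U \<union> W \<in> A \<inter> B then subset_weight q D (U \<union> W) else 0)"
    unfolding subset_prob_def
    using sum.reindex_bij_betw[OF Pow_split_bij[OF assms(2)],
        of "\<lambda>H. if H \<in> A \<inter> B then subset_weight q D H else 0"]
    by (simp add: case_prod_unfold)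
  also have "\<dots> = (\<Sum>(U, W)\<in>Pow D1 \<times> Pow (D - D1).
      (if U \<in> A then subset_weight q D1 U else 0) *
      (if W \<in> B then subset_weight q (D - D1) W else 0))"
  proof (intro sum.cong refl, clarify)
    fix U W assume UW: "U \<subseteq> D1" "W \<subseteq> D - D1"
    then have "U \<union> W \<subseteq> D" "(U \<union> W) \<inter> D1 = U" "(U \<union> W) \<inter> (D - D1) = W"
      using assms(2) by auto
    then have "U \<union> W \<in> A \<longleftrightarrow> U \<in> A" "U \<union> W \<in> B \<longleftrightarrow> W \<in> B"
      using A B by metis+
    then show "(if U \<union> W \<in> A \<inter> B then subset_weight q D (U \<union> W) else 0) =
        (if U \<in> A then subset_weight q D1 U else 0) *
        (if W \<in> B then subset_weight q (D - D1) W else 0)"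
      using subset_weight_Un[OF assms(1,2) UW] by auto
  qed
  also have "\<dots> = subset_prob q D1 A * subset_prob q (D - D1) B"
    unfolding subset_prob_def sum_product sum.cartesian_product by (simp add: case_prod_unfold)
  finally show ?thesis .
qed

lemma subset_prob_restrict:
  assumes "finite D" "D1 \<subseteq> D" "\<And>H. H \<subseteq> D \<Longrightarrow> H \<in> A \<longleftrightarrow> H \<inter> D1 \<in> A"
  shows "subset_prob q D A = subset_prob q D1 A"
  using subset_prob_Int_split[OF assms, of UNIV q] subset_prob_UNIV[of "D - D1"] assms(1)
  by simp

lemma subset_prob_indep:
  assumes "finite D" "D1 \<subseteq> D"
    and A: "\<And>H. H \<subseteq> D \<Longrightarrow> H \<in> A \<longleftrightarrow> H \<inter> D1 \<in> A"
    and B: "\<And>H. H \<subseteq> D \<Longrightarrow> H \<in> B \<longleftrightarrow> H \<inter> (D - D1) \<in> B"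
  shows "subset_prob q D (A \<inter> B) = subset_prob q D A * subset_prob q D B"
proof -
  have "subset_prob q D B = subset_prob q (D - D1) B"
    using assms(1) B by (intro subset_prob_restrict) auto
  then show ?thesis
    using subset_prob_Int_split[OF assms] subset_prob_restrict[OF assms(1,2) A] by simp
qed

section \<open>The Lovasz Local Lemma\<close>

lemma prod_le_prod_subset:
  fixes f :: "'i \<Rightarrow> real"
  assumes "finite T" "S \<subseteq> T" "\<And>j. j \<in> T \<Longrightarrow> 0 \<le> f j \<and> f j \<le> 1"
  shows "(\<Prod>j\<in>T. f j) \<le> (\<Prod>j\<in>S. f j)"
proof -
  have "(\<Prod>j\<in>T. f j) = (\<Prod>j\<in>T - S. f j) * (\<Prod>j\<in>S. f j)"
    by (rule prod.subset_diff[OF assms(2,1)])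
  also have "\<dots> \<le> 1 * (\<Prod>j\<in>S. f j)"
    using assms by (intro mult_right_mono prod_le_1 prod_nonneg) auto
  finally show ?thesis by simp
qed

text \<open>Instead of a probability measure, \<open>P\<close> is any set function with the few properties of a
  finite measure that the proof uses.\<close>

locale lovasz_local_lemma =
  fixes P :: "'b set \<Rightarrow> real" and A :: "'i \<Rightarrow> 'b set" and N :: "'i \<Rightarrow> 'i set"
    and x :: "'i \<Rightarrow> real" and J :: "'i set"
  assumes finite_J: "finite J"
    and mono: "\<And>X Y. X \<subseteq> Y \<Longrightarrow> P X \<le> P Y"
    and Diff: "\<And>X Y. P (X - Y) = P X - P (X \<inter> Y)"
    and nonneg: "\<And>X. 0 \<le> P X"
    and UNIV_pos: "P UNIV > 0"
    and x_bounds: "\<And>i. i \<in> J \<Longrightarrow> 0 \<le> x i \<and> x i < 1"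
    and N_subset: "\<And>i. i \<in> J \<Longrightarrow> N i \<subseteq> J"
    and indep: "\<And>i S. i \<in> J \<Longrightarrow> S \<subseteq> J - N i - {i} \<Longrightarrow>
       P (A i \<inter> - \<Union>(A ` S)) = P (A i) * P (- \<Union>(A ` S))"
    and prob_A_le: "\<And>i. i \<in> J \<Longrightarrow> P (A i) \<le> x i * (\<Prod>j\<in>N i. 1 - x j)"
begin

definition avoid :: "'i set \<Rightarrow> 'b set" where
  "avoid S = - \<Union>(A ` S)"

text \<open>\<open>conditional_bound S\<close> says \<open>P(A i | avoid S) \<le> x i\<close> for all \<open>i \<notin> S\<close>,
  written without division.\<close>

definition conditional_bound :: "'i set \<Rightarrow> bool" where
  "conditional_bound S \<longleftrightarrow> (\<forall>i\<in>J - S. P (A i \<inter> avoid S) \<le> x i * P (avoid S))"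

lemma avoid_Un_ge:
  assumes "finite U" "U \<subseteq> J" "R \<subseteq> J" "R \<inter> U = {}"
    and "\<And>T. R \<subseteq> T \<Longrightarrow> T \<subset> R \<union> U \<Longrightarrow> conditional_bound T"
  shows "P (avoid (R \<union> U)) \<ge> (\<Prod>j\<in>U. 1 - x j) * P (avoid R)"
  using assms
proof (induction U rule: finite_induct)
  case empty
  then show ?case by simp
next
  case (insert j U)
  have IH: "P (avoid (R \<union> U)) \<ge> (\<Prod>j\<in>U. 1 - x j) * P (avoid R)"
    using insert.prems insert.hyps by (intro insert.IH) auto
  have j: "j \<in> J - (R \<union> U)" using insert by auto
  have "conditional_bound (R \<union> U)" using insert by (intro insert.prems(4)) auto
  then have le: "P (avoid (R \<union> U) \<inter> A j) \<le> x j * P (avoid (R \<union> U))"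
    using j unfolding conditional_bound_def by (simp add: Int_commute)
  have "avoid (R \<union> insert j U) = avoid (R \<union> U) - A j" unfolding avoid_def by auto
  then have "P (avoid (R \<union> insert j U)) = P (avoid (R \<union> U)) - P (avoid (R \<union> U) \<inter> A j)"
    by (simp add: Diff)
  also have "\<dots> \<ge> (1 - x j) * P (avoid (R \<union> U))"
    using le by (simp add: left_diff_distrib)
  finally have "P (avoid (R \<union> insert j U)) \<ge> (1 - x j) * P (avoid (R \<union> U))" .
  moreover have "(1 - x j) * P (avoid (R \<union> U)) \<ge> (1 - x j) * ((\<Prod>j\<in>U. 1 - x j) * P (avoid R))"
    using IH x_bounds[of j] j by (intro mult_left_mono) auto
  ultimately show ?case using insert by (simp add: mult.assoc)
qed

lemma prob_A_Int_avoid_le: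
  assumes "i \<in> J - S" "S \<subseteq> J"
  shows "P (A i \<inter> avoid S) \<le> x i * (\<Prod>j\<in>S \<inter> N i. 1 - x j) * P (avoid (S - N i))"
proof -
  have "P (A i \<inter> avoid S) \<le> P (A i \<inter> avoid (S - N i))"
    by (intro mono) (auto simp: avoid_def)
  also have "\<dots> = P (A i) * P (avoid (S - N i))"
    unfolding avoid_def using assms by (intro indep) auto
  also have "\<dots> \<le> x i * (\<Prod>j\<in>N i. 1 - x j) * P (avoid (S - N i))"
    using prob_A_le[of i] assms(1) nonneg by (intro mult_right_mono) auto
  also have "\<dots> \<le> x i * (\<Prod>j\<in>S \<inter> N i. 1 - x j) * P (avoid (S - N i))"
  proof -
    have "(\<Prod>j\<in>N i. 1 - x j) \<le> (\<Prod>j\<in>S \<inter> N i. 1 - x j)"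
    proof (rule prod_le_prod_subset)
      show "finite (N i)" using N_subset[of i] assms(1) finite_J by (simp add: finite_subset)
      show "\<And>j. j \<in> N i \<Longrightarrow> 0 \<le> 1 - x j \<and> 1 - x j \<le> 1"
        using N_subset[of i] assms(1) x_bounds by force
    qed auto
    then show ?thesis
      using x_bounds[of i] assms(1) nonneg by (intro mult_right_mono mult_left_mono) auto
  qed
  finally show ?thesis .
qed

text \<open>Split \<open>S\<close> into its part \<open>S \<inter> N i\<close> inside the neighbourhood of \<open>i\<close> and the rest:
  independence from the rest bounds the numerator of \<open>P(A i | avoid S)\<close>, and the induction
  hypothesis, through \<open>avoid_Un_ge\<close>, bounds the denominator.\<close>

lemma conditional_bound_holds: "S \<subseteq> J \<Longrightarrow> conditional_bound S"
proof (induction "card S" arbitrary: S rule: less_induct)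
  case less
  show ?case unfolding conditional_bound_def
  proof
    fix i assume i: "i \<in> J - S"
    have finite_S: "finite S" using less.prems finite_J finite_subset by auto
    have "(\<Prod>j\<in>S \<inter> N i. 1 - x j) * P (avoid (S - N i)) \<le> P (avoid ((S - N i) \<union> (S \<inter> N i)))"
    proof (rule avoid_Un_ge)
      show "finite (S \<inter> N i)" "S \<inter> N i \<subseteq> J" "S - N i \<subseteq> J" "(S - N i) \<inter> (S \<inter> N i) = {}"
        using finite_S less.prems by auto
      fix T assume "S - N i \<subseteq> T" "T \<subset> (S - N i) \<union> (S \<inter> N i)"
      then have "T \<subset> S" by auto
      then show "conditional_bound T"
        using less.prems finite_S by (intro less.hyps) (auto intro: psubset_card_mono)
    qed
    moreover have "(S - N i) \<union> (S \<inter> N i) = S" by auto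
    ultimately have "x i * (\<Prod>j\<in>S \<inter> N i. 1 - x j) * P (avoid (S - N i)) \<le> x i * P (avoid S)"
      using x_bounds[of i] i by (simp add: mult.assoc mult_left_mono)
    then show "P (A i \<inter> avoid S) \<le> x i * P (avoid S)"
      using prob_A_Int_avoid_le[OF i less.prems] by linarith
  qed
qed

theorem avoid_all_pos: "P (- \<Union>(A ` J)) > 0"
proof -
  have "P (avoid ({} \<union> J)) \<ge> (\<Prod>j\<in>J. 1 - x j) * P (avoid {})"
    using finite_J by (intro avoid_Un_ge) (auto intro: conditional_bound_holds)
  moreover have "(\<Prod>j\<in>J. 1 - x j) > 0" using x_bounds by (intro prod_pos) auto
  moreover have "P (avoid {}) > 0" using UNIV_pos by (simp add: avoid_def)
  ultimately show ?thesis
    unfolding avoid_def by (metis Un_empty_left mult_pos_pos order_less_le_trans)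
qed

end

section \<open>Pairs of vertices and clique covers\<close>

definition pairs :: "'a set \<Rightarrow> 'a set set" where
  "pairs Q = {e. e \<subseteq> Q \<and> card e = 2}"

lemma finite_pairs: "finite Q \<Longrightarrow> finite (pairs Q)"
  unfolding pairs_def by (rule finite_subset[of _ "Pow Q"]) auto

lemma card_pairs: "finite Q \<Longrightarrow> card (pairs Q) = card Q choose 2"
  unfolding pairs_def by (rule n_subsets)

lemma pairs_mono: "Q \<subseteq> Q' \<Longrightarrow> pairs Q \<subseteq> pairs Q'"
  unfolding pairs_def by auto

lemma pairs_disjoint:
  assumes "finite Q" "card (Q \<inter> Q') < 2"
  shows "pairs Q \<inter> pairs Q' = {}"
proof (rule ccontr)
  assume "pairs Q \<inter> pairs Q' \<noteq> {}"
  then obtain e where "e \<subseteq> Q \<inter> Q'" "card e = 2" unfolding pairs_def by auto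
  then have "2 \<le> card (Q \<inter> Q')" using assms(1) by (metis card_mono finite_Int)
  with assms show False by simp
qed

lemma pair_subset_imp_card_Int_ge_2:
  assumes "e \<in> pairs Q" "e \<subseteq> X" "finite Q"
  shows "2 \<le> card (Q \<inter> X)"
proof -
  have "e \<subseteq> Q \<inter> X" "card e = 2" using assms unfolding pairs_def by auto
  then show ?thesis using assms(3) card_mono[of "Q \<inter> X" e] by simp
qed

lemma pairsE:
  assumes "e \<in> pairs Q"
  obtains u v where "e = {u, v}" "u \<in> Q" "v \<in> Q" "u \<noteq> v"
proof -
  have "card e = 2" "e \<subseteq> Q" using assms by (auto simp: pairs_def)
  then show ?thesis using that by (auto simp: card_2_iff)
qed

lemma card_4_subsets_meeting_le:
  assumes "finite V" "X \<subseteq> V"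
  shows "card {Q. Q \<subseteq> V \<and> card Q = 4 \<and> 2 \<le> card (Q \<inter> X)} \<le> card X ^ 2 * card V ^ 2"
proof -
  have finite_X: "finite X" using assms finite_subset by auto
  have "{Q. Q \<subseteq> V \<and> card Q = 4 \<and> 2 \<le> card (Q \<inter> X)} \<subseteq>
      (\<lambda>(a, b, c, d). {a, b, c, d}) ` (X \<times> X \<times> V \<times> V)"
  proof
    fix Q assume "Q \<in> {Q. Q \<subseteq> V \<and> card Q = 4 \<and> 2 \<le> card (Q \<inter> X)}"
    then have Q: "Q \<subseteq> V" "card Q = 4" "2 \<le> card (Q \<inter> X)" by auto
    obtain S where S: "S \<subseteq> Q \<inter> X" "card S = 2"
      using obtain_subset_with_card_n[OF Q(3)] by blast
    then obtain a b where ab: "S = {a, b}" by (auto simp: card_2_iff)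
    have "finite Q" using Q(1) assms(1) finite_subset by blast
    then have "S \<subseteq> Q" "finite S" using S finite_subset by auto
    then have "card (Q - S) = 2" using S Q by (simp add: card_Diff_subset)
    then obtain c d where cd: "Q - S = {c, d}" by (auto simp: card_2_iff)
    have "Q = {a, b, c, d}" using cd ab S by auto
    moreover have "(a, b, c, d) \<in> X \<times> X \<times> V \<times> V" using ab S cd Q by auto
    ultimately show "Q \<in> (\<lambda>(a, b, c, d). {a, b, c, d}) ` (X \<times> X \<times> V \<times> V)" by force
  qed
  then have "card {Q. Q \<subseteq> V \<and> card Q = 4 \<and> 2 \<le> card (Q \<inter> X)} \<le>
      card ((\<lambda>(a, b, c, d). {a, b, c, d}) ` (X \<times> X \<times> V \<times> V))"
    using assms finite_X by (intro card_mono) auto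
  also have "\<dots> \<le> card (X \<times> X \<times> V \<times> V)"
    by (rule card_image_le) (use assms finite_X in auto)
  also have "\<dots> = card X ^ 2 * card V ^ 2"
    by (simp add: card_cartesian_product power2_eq_square)
  finally show ?thesis .
qed

lemma alpha_less:
  assumes "\<And>Q. Q \<subseteq> V \<Longrightarrow> card Q = r \<Longrightarrow> pairs Q \<inter> E \<noteq> {}"
  shows "alpha V E < r"
proof -
  have small: "card S < r" if "is_stable V E S" for S
  proof (rule ccontr)
    assume "\<not> card S < r"
    then obtain Q where Q: "Q \<subseteq> S" "card Q = r"
      using obtain_subset_with_card_n by (metis not_less)
    moreover have "S \<subseteq> V" using that by (simp add: is_stable_def)
    ultimately obtain e where "e \<in> pairs Q" "e \<in> E" using assms by blast
    then obtain u v where "{u, v} \<in> E" "u \<in> S" "v \<in> S"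
      using Q by (metis pairsE subsetD)
    then show False using that by (auto simp: is_stable_def)
  qed
  have "is_stable V E {}" by (simp add: is_stable_def)
  then have "{card S | S. is_stable V E S} \<noteq> {}" by blast
  moreover have "finite {card S | S. is_stable V E S}"
    by (rule finite_subset[of _ "{..<r}"]) (use small in auto)
  ultimately show ?thesis unfolding alpha_def using small by auto
qed

lemma card_clique_less:
  assumes "is_clique V E X" "\<And>Q. Q \<subseteq> V \<Longrightarrow> card Q = k \<Longrightarrow> \<not> pairs Q \<subseteq> E"
  shows "card X < k"
proof (rule ccontr)
  assume "\<not> card X < k"
  then obtain Q where Q: "Q \<subseteq> X" "card Q = k"
    using obtain_subset_with_card_n by (metis not_less)
  moreover have "X \<subseteq> V" using assms(1) by (simp add: is_clique_def)
  ultimately obtain e where "e \<in> pairs Q" "e \<notin> E" using assms(2) by blast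
  then obtain u v where "{u, v} \<notin> E" "u \<in> X" "v \<in> X" "u \<noteq> v"
    using Q by (metis pairsE subsetD)
  then show False using assms(1) by (auto simp: is_clique_def)
qed

lemma four_subsets_meet_clique_cover:
  assumes "finite V" "is_clique_cover V E \<C>"
    and "\<And>Q. Q \<subseteq> V \<Longrightarrow> card Q = 4 \<Longrightarrow> pairs Q \<inter> E \<noteq> {}"
  shows "{Q. Q \<subseteq> V \<and> card Q = 4} \<subseteq>
    (\<Union>X\<in>\<C>. {Q. Q \<subseteq> V \<and> card Q = 4 \<and> 2 \<le> card (Q \<inter> X)})"
proof
  fix Q assume "Q \<in> {Q. Q \<subseteq> V \<and> card Q = 4}"
  then have Q: "Q \<subseteq> V" "card Q = 4" by auto
  then obtain e where e: "e \<in> pairs Q" "e \<in> E" using assms(3) by blast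
  then obtain X where X: "X \<in> \<C>" "e \<subseteq> X"
    using assms(2) by (auto simp: is_clique_cover_def)
  have "finite Q" using Q assms(1) finite_subset by auto
  then have "2 \<le> card (Q \<inter> X)" using pair_subset_imp_card_Int_ge_2[OF e(1) X(2)] by simp
  then show "Q \<in> (\<Union>X\<in>\<C>. {Q. Q \<subseteq> V \<and> card Q = 4 \<and> 2 \<le> card (Q \<inter> X)})"
    using Q X by auto
qed

lemma clique_cover_card_ge:
  assumes "finite V" "is_clique_cover V E \<C>"
    and four_sets: "\<And>Q. Q \<subseteq> V \<Longrightarrow> card Q = 4 \<Longrightarrow> pairs Q \<inter> E \<noteq> {}"
    and clique_size: "\<And>X. X \<in> \<C> \<Longrightarrow> card X \<le> k"
  shows "card V choose 4 \<le> card \<C> * k ^ 2 * card V ^ 2"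
proof -
  define F where "F X = {Q. Q \<subseteq> V \<and> card Q = 4 \<and> 2 \<le> card (Q \<inter> X)}" for X
  have "finite \<C>" and X_subset: "\<And>X. X \<in> \<C> \<Longrightarrow> X \<subseteq> V"
    using assms(2) by (auto simp: is_clique_cover_def is_clique_def)
  have cover: "{Q. Q \<subseteq> V \<and> card Q = 4} \<subseteq> (\<Union>X\<in>\<C>. F X)"
    unfolding F_def using assms(1,2) four_sets by (rule four_subsets_meet_clique_cover)
  have "finite (\<Union>X\<in>\<C>. F X)"
    by (rule finite_subset[of _ "Pow V"]) (use assms(1) in \<open>auto simp: F_def\<close>)
  then have "card {Q. Q \<subseteq> V \<and> card Q = 4} \<le> card (\<Union>X\<in>\<C>. F X)"
    using cover by (rule card_mono)
  then have "card V choose 4 \<le> card (\<Union>X\<in>\<C>. F X)"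
    using n_subsets[OF assms(1), of 4] by simp
  also have "\<dots> \<le> (\<Sum>X\<in>\<C>. card (F X))" by (rule card_UN_le[OF \<open>finite \<C>\<close>])
  also have "\<dots> \<le> (\<Sum>X\<in>\<C>. k ^ 2 * card V ^ 2)"
  proof (rule sum_mono)
    fix X assume X: "X \<in> \<C>"
    have "card (F X) \<le> card X ^ 2 * card V ^ 2"
      unfolding F_def using assms(1) X_subset[OF X] by (rule card_4_subsets_meeting_le)
    also have "\<dots> \<le> k ^ 2 * card V ^ 2" using clique_size[OF X] by (simp add: power_mono)
    finally show "card (F X) \<le> k ^ 2 * card V ^ 2" .
  qed
  finally show ?thesis by simp
qed

section \<open>A random graph without independent 4-sets and large cliques\<close>

text \<open>The bad events for a random graph with edge set \<open>E \<subseteq> pairs V\<close>: a 4-set is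
  independent, or a set of any other size (in the application, of size \<open>k\<close>) is a clique.\<close>

definition ramsey_event :: "'a set \<Rightarrow> 'a set set set" where
  "ramsey_event Q = (if card Q = 4 then {E. pairs Q \<inter> E = {}} else {E. pairs Q \<subseteq> E})"

lemma ramsey_event_cong: "E \<inter> pairs Q = E' \<inter> pairs Q \<Longrightarrow> E \<in> ramsey_event Q \<longleftrightarrow> E' \<in> ramsey_event Q"
  unfolding ramsey_event_def by auto

lemma subset_prob_ramsey_event:
  assumes "finite D" "finite Q" "pairs Q \<subseteq> D"
  shows "subset_prob q D (ramsey_event Q) = (if card Q = 4 then 1 - q else q) ^ (card Q choose 2)"
proof -
  define T where "T = (if card Q = 4 then {} else pairs Q)"
  have event_iff: "H \<in> ramsey_event Q \<longleftrightarrow> H = T" if "H \<subseteq> pairs Q" for H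
    using that unfolding T_def ramsey_event_def by auto
  have "subset_prob q D (ramsey_event Q) = subset_prob q (pairs Q) (ramsey_event Q)"
    using assms by (intro subset_prob_restrict ramsey_event_cong) auto
  also have "\<dots> = (\<Sum>H\<in>Pow (pairs Q). if H = T then subset_weight q (pairs Q) H else 0)"
    unfolding subset_prob_def by (intro sum.cong) (auto simp: event_iff)
  also have "\<dots> = subset_weight q (pairs Q) T"
    using finite_pairs[OF assms(2)] by (simp add: T_def)
  also have "\<dots> = (if card Q = 4 then 1 - q else q) ^ (card Q choose 2)"
    unfolding subset_weight_def T_def using card_pairs[OF assms(2)] by simp
  finally show ?thesis .
qed

lemma subset_prob_ramsey_event_indep:
  assumes "finite V" "Q \<subseteq> V" "\<And>Q'. Q' \<in> S \<Longrightarrow> Q' \<subseteq> V \<and> card (Q \<inter> Q') < 2"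
  shows "subset_prob q (pairs V) (ramsey_event Q \<inter> - \<Union>(ramsey_event ` S)) =
    subset_prob q (pairs V) (ramsey_event Q) * subset_prob q (pairs V) (- \<Union>(ramsey_event ` S))"
proof (rule subset_prob_indep)
  show "finite (pairs V)" "pairs Q \<subseteq> pairs V"
    using assms(1,2) by (auto simp: finite_pairs pairs_mono)
  show "E \<in> ramsey_event Q \<longleftrightarrow> E \<inter> pairs Q \<in> ramsey_event Q" for E
    by (rule ramsey_event_cong) auto
  have "E \<in> ramsey_event Q' \<longleftrightarrow> E \<inter> (pairs V - pairs Q) \<in> ramsey_event Q'" if "Q' \<in> S" for E Q'
  proof (rule ramsey_event_cong)
    have "finite Q" using assms(1,2) finite_subset by auto
    then have "pairs Q \<inter> pairs Q' = {}" "pairs Q' \<subseteq> pairs V"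
      using assms(3)[OF that] by (auto simp: pairs_disjoint pairs_mono)
    then show "E \<inter> pairs Q' = E \<inter> (pairs V - pairs Q) \<inter> pairs Q'" by auto
  qed
  then show "E \<in> - \<Union>(ramsey_event ` S) \<longleftrightarrow> E \<inter> (pairs V - pairs Q) \<in> - \<Union>(ramsey_event ` S)" for E
    by blast
qed

lemma prod_ramsey_weights_ge:
  fixes x y :: real
  assumes "finite V" "Q \<subseteq> V" "k \<noteq> 4" "0 \<le> x" "x \<le> 1" "0 \<le> y" "y \<le> 1"
    and M: "\<And>Q'. Q' \<in> M \<Longrightarrow> Q' \<subseteq> V \<and> (card Q' = 4 \<and> 2 \<le> card (Q' \<inter> Q) \<or> card Q' = k)"
  shows "(1 - x) ^ (card Q ^ 2 * card V ^ 2) * (1 - y) ^ (card V choose k) \<le>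
    (\<Prod>Q'\<in>M. 1 - (if card Q' = 4 then x else y))"
proof -
  define M4 where "M4 = {Q'. Q' \<subseteq> V \<and> card Q' = 4 \<and> 2 \<le> card (Q' \<inter> Q)}"
  define Mk where "Mk = {Q'. Q' \<subseteq> V \<and> card Q' = k}"
  have "finite M4" "finite Mk" "M4 \<inter> Mk = {}"
    using assms(1,3) by (auto simp: M4_def Mk_def intro: finite_subset[of _ "Pow V"])
  have "(1 - x) ^ (card Q ^ 2 * card V ^ 2) \<le> (1 - x) ^ card M4"
    unfolding M4_def using assms(1,2,4,5)
    by (intro power_decreasing card_4_subsets_meeting_le) auto
  then have "(1 - x) ^ (card Q ^ 2 * card V ^ 2) * (1 - y) ^ (card V choose k) \<le>
      (\<Prod>Q'\<in>M4. 1 - x) * (\<Prod>Q'\<in>Mk. 1 - y)"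
    using assms(1,6,7) by (simp add: Mk_def n_subsets mult_right_mono)
  also have "\<dots> = (\<Prod>Q'\<in>M4. 1 - (if card Q' = 4 then x else y)) *
      (\<Prod>Q'\<in>Mk. 1 - (if card Q' = 4 then x else y))"
    using assms(3) by (intro arg_cong2[where f = "(*)"] prod.cong) (auto simp: M4_def Mk_def)
  also have "\<dots> = (\<Prod>Q'\<in>M4 \<union> Mk. 1 - (if card Q' = 4 then x else y))"
    using \<open>finite M4\<close> \<open>finite Mk\<close> \<open>M4 \<inter> Mk = {}\<close> by (simp add: prod.union_disjoint)
  also have "\<dots> \<le> (\<Prod>Q'\<in>M. 1 - (if card Q' = 4 then x else y))"
    using \<open>finite M4\<close> \<open>finite Mk\<close> M assms(4-7)
    by (intro prod_le_prod_subset) (auto simp: M4_def Mk_def)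
  finally show ?thesis .
qed

lemma subset_prob_ramsey_event_le:
  fixes q x y :: real
  assumes "finite V" "Q \<subseteq> V" "card Q = 4 \<or> card Q = k"
    and "k \<noteq> 4" "0 \<le> x" "x \<le> 1" "0 \<le> y" "y \<le> 1"
    and four_sets: "(1 - q) ^ 6 \<le> x * (1 - x) ^ (16 * card V ^ 2) * (1 - y) ^ (card V choose k)"
    and k_sets: "q ^ (k choose 2) \<le> y * (1 - x) ^ (k ^ 2 * card V ^ 2) * (1 - y) ^ (card V choose k)"
    and M: "\<And>Q'. Q' \<in> M \<Longrightarrow> Q' \<subseteq> V \<and> (card Q' = 4 \<and> 2 \<le> card (Q' \<inter> Q) \<or> card Q' = k)"
  shows "subset_prob q (pairs V) (ramsey_event Q) \<le>
    (if card Q = 4 then x else y) * (\<Prod>Q'\<in>M. 1 - (if card Q' = 4 then x else y))"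
proof -
  have "finite Q" using assms(1,2) finite_subset by blast
  then have prob: "subset_prob q (pairs V) (ramsey_event Q) =
      (if card Q = 4 then 1 - q else q) ^ (card Q choose 2)"
    using assms(1,2) by (intro subset_prob_ramsey_event) (auto simp: finite_pairs pairs_mono)
  have weights: "(1 - x) ^ (card Q ^ 2 * card V ^ 2) * (1 - y) ^ (card V choose k) \<le>
      (\<Prod>Q'\<in>M. 1 - (if card Q' = 4 then x else y))"
    by (rule prod_ramsey_weights_ge[OF assms(1,2,4-8) M])
  show ?thesis
  proof (cases "card Q = 4")
    case True
    then have "subset_prob q (pairs V) (ramsey_event Q) \<le>
        x * ((1 - x) ^ (card Q ^ 2 * card V ^ 2) * (1 - y) ^ (card V choose k))"
      using prob four_sets by (simp add: mult.assoc choose_two)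
    then show ?thesis using True weights assms(5) by (simp add: mult_left_mono order_trans)
  next
    case False
    then have "subset_prob q (pairs V) (ramsey_event Q) \<le>
        y * ((1 - x) ^ (card Q ^ 2 * card V ^ 2) * (1 - y) ^ (card V choose k))"
      using prob k_sets assms(3) by (simp add: mult.assoc)
    then show ?thesis using False weights assms(7) by (simp add: mult_left_mono order_trans)
  qed
qed

definition ramsey_sets :: "'a set \<Rightarrow> nat \<Rightarrow> 'a set set" where
  "ramsey_sets V k = {Q. Q \<subseteq> V \<and> (card Q = 4 \<or> card Q = k)}"

lemma lovasz_local_lemma_ramsey_events:
  fixes q x y :: real
  assumes "finite V" "k \<noteq> 4" "0 \<le> q" "q \<le> 1" "0 \<le> x" "x < 1" "0 \<le> y" "y < 1"
    and "(1 - q) ^ 6 \<le> x * (1 - x) ^ (16 * card V ^ 2) * (1 - y) ^ (card V choose k)"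
    and "q ^ (k choose 2) \<le> y * (1 - x) ^ (k ^ 2 * card V ^ 2) * (1 - y) ^ (card V choose k)"
  shows "lovasz_local_lemma (subset_prob q (pairs V)) ramsey_event
    (\<lambda>Q. {Q' \<in> ramsey_sets V k. 2 \<le> card (Q \<inter> Q')}) (\<lambda>Q. if card Q = 4 then x else y)
    (ramsey_sets V k)"
proof
  show "finite (ramsey_sets V k)"
    using assms(1) by (auto simp: ramsey_sets_def intro: finite_subset[of _ "Pow V"])
  show "\<And>X Y. X \<subseteq> Y \<Longrightarrow> subset_prob q (pairs V) X \<le> subset_prob q (pairs V) Y"
    using assms(3,4) by (rule subset_prob_mono)
  show "\<And>X Y. subset_prob q (pairs V) (X - Y) =
      subset_prob q (pairs V) X - subset_prob q (pairs V) (X \<inter> Y)"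
    by (rule subset_prob_Diff)
  show "\<And>X. 0 \<le> subset_prob q (pairs V) X" using assms(3,4) by (rule subset_prob_nonneg)
  show "0 < subset_prob q (pairs V) UNIV"
    using assms(1) by (simp add: subset_prob_UNIV finite_pairs)
  show "\<And>Q. Q \<in> ramsey_sets V k \<Longrightarrow>
      0 \<le> (if card Q = 4 then x else y) \<and> (if card Q = 4 then x else y) < 1"
    using assms(5-8) by simp
  show "\<And>Q. {Q' \<in> ramsey_sets V k. 2 \<le> card (Q \<inter> Q')} \<subseteq> ramsey_sets V k" by auto
next
  fix Q S assume "Q \<in> ramsey_sets V k"
    and "S \<subseteq> ramsey_sets V k - {Q' \<in> ramsey_sets V k. 2 \<le> card (Q \<inter> Q')} - {Q}"
  then show "subset_prob q (pairs V) (ramsey_event Q \<inter> - \<Union>(ramsey_event ` S)) =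
      subset_prob q (pairs V) (ramsey_event Q) * subset_prob q (pairs V) (- \<Union>(ramsey_event ` S))"
    using assms(1) by (intro subset_prob_ramsey_event_indep) (auto simp: ramsey_sets_def)
next
  fix Q assume "Q \<in> ramsey_sets V k"
  then show "subset_prob q (pairs V) (ramsey_event Q) \<le> (if card Q = 4 then x else y) *
      (\<Prod>Q'\<in>{Q' \<in> ramsey_sets V k. 2 \<le> card (Q \<inter> Q')}. 1 - (if card Q' = 4 then x else y))"
    using assms by (intro subset_prob_ramsey_event_le) (auto simp: ramsey_sets_def Int_commute)
qed

lemma exists_graph_without_independent_4_sets_and_k_cliques:
  fixes q x y :: real
  assumes "finite V" "k \<noteq> 4" "0 \<le> q" "q \<le> 1" "0 \<le> x" "x < 1" "0 \<le> y" "y < 1"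
    and "(1 - q) ^ 6 \<le> x * (1 - x) ^ (16 * card V ^ 2) * (1 - y) ^ (card V choose k)"
    and "q ^ (k choose 2) \<le> y * (1 - x) ^ (k ^ 2 * card V ^ 2) * (1 - y) ^ (card V choose k)"
  shows "\<exists>E \<subseteq> pairs V. (\<forall>Q \<subseteq> V. card Q = 4 \<longrightarrow> pairs Q \<inter> E \<noteq> {}) \<and>
    (\<forall>Q \<subseteq> V. card Q = k \<longrightarrow> \<not> pairs Q \<subseteq> E)"
proof -
  interpret lovasz_local_lemma "subset_prob q (pairs V)" ramsey_event
    "\<lambda>Q. {Q' \<in> ramsey_sets V k. 2 \<le> card (Q \<inter> Q')}" "\<lambda>Q. if card Q = 4 then x else y"
    "ramsey_sets V k"
    using assms by (rule lovasz_local_lemma_ramsey_events)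
  obtain E where E: "E \<subseteq> pairs V" "E \<notin> \<Union>(ramsey_event ` ramsey_sets V k)"
    using subset_prob_pos_imp_ex[OF avoid_all_pos] by blast
  have avoided: "E \<notin> ramsey_event Q" if "Q \<subseteq> V" "card Q = 4 \<or> card Q = k" for Q
    using E(2) that by (auto simp: ramsey_sets_def)
  show ?thesis
  proof (intro exI[of _ E] conjI allI impI)
    show "E \<subseteq> pairs V" by (rule E(1))
  next
    fix Q assume "Q \<subseteq> V" "card Q = 4"
    then show "pairs Q \<inter> E \<noteq> {}" using avoided[of Q] by (simp add: ramsey_event_def)
  next
    fix Q assume "Q \<subseteq> V" "card Q = k"
    then show "\<not> pairs Q \<subseteq> E" using avoided[of Q] assms(2) by (simp add: ramsey_event_def)
  qed
qed

section \<open>Choice of the parameters\<close>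

lemma exp_neg_two_mult_le:
  fixes t :: real
  assumes "0 \<le> t" "t \<le> 1/2"
  shows "exp (-2 * t) \<le> 1 - t"
proof -
  have "1 \<le> (1 - t) * (1 + 2 * t)"
    using assms mult_left_mono[of t "1/2" t] by (simp add: algebra_simps)
  also have "\<dots> \<le> (1 - t) * exp (2 * t)"
    using assms exp_ge_add_one_self[of "2 * t"] by (intro mult_left_mono) auto
  finally show ?thesis by (simp add: exp_minus field_simps)
qed

lemma one_minus_power_ge_half:
  fixes t :: real
  assumes "0 \<le> t" "t \<le> 1" "real N * t \<le> 1/2"
  shows "1/2 \<le> (1 - t) ^ N"
  using Bernoulli_inequality[of "- t" N] assms by simp

lemma one_minus_power_le_exp:
  fixes t :: real
  assumes "t \<le> 1"
  shows "(1 - t) ^ N \<le> exp (- real N * t)"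
proof -
  have "(1 - t) ^ N \<le> exp (- t) ^ N"
    using exp_ge_add_one_self[of "- t"] assms by (intro power_mono) auto
  then show ?thesis by (simp add: exp_of_nat_mult[symmetric])
qed

lemma of_nat_choose_two: "real (m choose 2) = real m * (real m - 1) / 2"
proof -
  have "even (m * (m - 1))" by auto
  then have "real (m choose 2) = real (m * (m - 1)) / 2" by (simp add: choose_two real_of_nat_div)
  then show ?thesis by (cases m) (simp_all add: algebra_simps)
qed

lemma ln_4_le_2: "ln 4 \<le> (2::real)"
  using ln_2_less_1 ln_mult[of 2 2] by simp

lemma k_set_exponent_le:
  fixes s L K :: real
  assumes s: "s \<ge> 2" and L: "L \<ge> 1" and K: "K \<ge> 16 * s * L"
  shows "K * L + K\<^sup>2 / (8 * s) + ln 4 \<le> K * (K - 1) / (4 * s)"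
proof -
  have "s \<le> s * L" using s L mult_left_mono[of 1 L s] by simp
  then have K_ge: "K \<ge> 16 * s" using K by linarith
  have "16 * (s * L * K) \<le> K * K"
    using mult_right_mono[OF K, of K] K_ge s by (simp add: algebra_simps)
  moreover have "2 * K \<le> s * L * K"
    by (intro mult_right_mono) (use \<open>s \<le> s * L\<close> s K_ge in linarith)+
  moreover have "s * ln 4 \<le> 2 * s" using ln_4_le_2 s by simp
  ultimately have "0 \<le> K * K - 2 * K - 8 * (s * L * K) - 8 * (s * ln 4)"
    using K_ge s by linarith
  moreover have "K * (K - 1) / (4 * s) - (K * L + K\<^sup>2 / (8 * s) + ln 4) =
      (K * K - 2 * K - 8 * (s * L * K) - 8 * (s * ln 4)) / (8 * s)"
    using s by (simp add: field_simps power2_eq_square)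
  moreover have "0 < 8 * s" using s by simp
  ultimately show ?thesis by (metis diff_ge_0_iff_ge divide_nonneg_pos)
qed

text \<open>With \<open>s = n\<^bsup>2/5\<^esup>\<close>, a pair is a non-edge with probability \<open>p = 1/(2s)\<close>, cliques are
  forced to have fewer than \<open>k \<approx> 16 s ln n\<close> vertices, and \<open>x\<close>, \<open>y\<close> are the Local Lemma
  weights of 4-sets and of \<open>k\<close>-sets.\<close>

locale ramsey_parameters =
  fixes n :: nat
  assumes n_ge_8: "n \<ge> 8"
begin

definition s :: real where "s = real n powr (2/5)"
definition L :: real where "L = ln (real n)"
definition k :: nat where "k = nat \<lceil>16 * s * L\<rceil>"
definition p :: real where "p = 1 / (2 * s)"
definition x :: real where "x = 4 * p ^ 6"
definition y :: real where "y = 1 / (2 * real n ^ k)"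

lemma n_pos: "real n > 0"
  using n_ge_8 by simp

lemma s_pow_5: "s ^ 5 = real n ^ 2"
  unfolding s_def using n_pos by (simp add: powr_power)

lemma s_ge_2: "s \<ge> 2"
proof (rule power_le_imp_le_base)
  have "(2::real) ^ 5 \<le> 8 ^ 2" by simp
  also have "\<dots> \<le> real n ^ 2" using n_ge_8 by (intro power_mono) auto
  finally show "2 ^ Suc 4 \<le> s ^ Suc 4" using s_pow_5 by simp
  show "0 \<le> s" unfolding s_def by simp
qed

lemma L_ge_1: "L \<ge> 1"
  unfolding L_def using n_ge_8 exp_le n_pos by (simp add: ln_ge_iff)

lemma sL_ge_2: "s * L \<ge> 2"
  using s_ge_2 L_ge_1 mult_mono[of 2 s 1 L] by simp

lemma k_ge: "16 * s * L \<le> real k"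
  unfolding k_def by (rule real_nat_ceiling_ge)

lemma k_le: "real k \<le> 17 * s * L"
proof -
  have "real k = of_int \<lceil>16 * s * L\<rceil>" unfolding k_def using sL_ge_2 by simp
  then show ?thesis using of_int_ceiling_le_add_one[of "16 * s * L"] sL_ge_2 by linarith
qed

lemma k_ne_4: "k \<noteq> 4"
  using k_ge sL_ge_2 by auto

lemma p_bounds: "0 \<le> p" "p \<le> 1/4"
  unfolding p_def using s_ge_2 by (auto simp: field_simps)

lemma p_pow_6_mult_n_sq: "p ^ 6 * real n ^ 2 = 1 / (64 * s)"
proof -
  have "p ^ 6 * real n ^ 2 = s ^ 5 / (64 * s ^ 6)"
    unfolding p_def s_pow_5[symmetric] by (simp add: power_divide power_mult_distrib)
  also have "\<dots> = 1 / (64 * s)" using s_ge_2 by (simp add: field_simps eval_nat_numeral)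
  finally show ?thesis .
qed

lemma x_bounds: "0 \<le> x" "x \<le> 1/2"
proof -
  have "p ^ 6 \<le> (1/4) ^ 6" using p_bounds by (intro power_mono)
  then show "0 \<le> x" "x \<le> 1/2" unfolding x_def using p_bounds by (simp_all add: power_divide)
qed

lemma n_pow_k_mult_y: "real n ^ k * y = 1/2"
  unfolding y_def using n_pos by simp

lemma y_bounds: "0 \<le> y" "y \<le> 1/2"
proof -
  have "1 \<le> real n ^ k" using n_ge_8 by (intro one_le_power) simp
  then show "0 \<le> y" unfolding y_def by simp
  then show "y \<le> 1/2"
    using mult_right_mono[OF \<open>1 \<le> real n ^ k\<close>] n_pow_k_mult_y by fastforce
qed

lemma one_minus_y_power_ge_half: "1/2 \<le> (1 - y) ^ (n choose k)"
proof (rule one_minus_power_ge_half)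
  have "real (n choose k) \<le> real n ^ k"
    by (cases "k \<le> n") (simp_all add: binomial_le_pow binomial_eq_0 flip: of_nat_power)
  then show "real (n choose k) * y \<le> 1/2"
    using n_pow_k_mult_y y_bounds mult_right_mono by metis
qed (use y_bounds in auto)

lemma four_set_condition: "p ^ 6 \<le> x * (1 - x) ^ (16 * n ^ 2) * (1 - y) ^ (n choose k)"
proof -
  have "real (16 * n ^ 2) * x = 1 / s"
    unfolding x_def using p_pow_6_mult_n_sq by (simp add: field_simps)
  also have "\<dots> \<le> 1/2" using s_ge_2 by simp
  finally have "1/2 \<le> (1 - x) ^ (16 * n ^ 2)"
    using x_bounds by (intro one_minus_power_ge_half) auto
  then have "x * (1/2) * (1/2) \<le> x * (1 - x) ^ (16 * n ^ 2) * (1 - y) ^ (n choose k)"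
    using one_minus_y_power_ge_half x_bounds by (intro mult_mono mult_left_mono) auto
  then show ?thesis unfolding x_def by simp
qed

lemma k_set_condition:
  "(1 - p) ^ (k choose 2) \<le> y * (1 - x) ^ (k ^ 2 * n ^ 2) * (1 - y) ^ (n choose k)"
proof -
  have "real n ^ k = exp (real k * L)"
    unfolding L_def using n_pos by (simp add: exp_of_nat_mult)
  then have "exp (- (real k * L)) = inverse (real n ^ k)"
    by (simp add: exp_minus)
  then have y_exp: "exp (- (real k * L)) / 2 = y"
    unfolding y_def by (simp add: field_simps)
  have x_exponent: "real (k ^ 2 * n ^ 2) * (2 * x) = (real k)\<^sup>2 / (8 * s)"
    unfolding x_def using p_pow_6_mult_n_sq s_ge_2 by (simp add: field_simps)
  have "(1 - p) ^ (k choose 2) \<le> exp (- real (k choose 2) * p)"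
    using p_bounds by (intro one_minus_power_le_exp) simp
  also have "\<dots> = exp (- (real k * (real k - 1) / (4 * s)))"
    unfolding of_nat_choose_two p_def by (simp add: field_simps)
  also have "\<dots> \<le> exp (- (real k * L) - (real k)\<^sup>2 / (8 * s) - ln 4)"
    using k_set_exponent_le[OF s_ge_2 L_ge_1 k_ge] by simp
  also have "\<dots> = exp (- (real k * L)) / 2 * inverse (exp ((real k)\<^sup>2 / (8 * s))) * (1/2)"
    by (simp add: exp_diff exp_add field_simps)
  also have "\<dots> = y * exp (- 2 * x) ^ (k ^ 2 * n ^ 2) * (1/2)"
  proof -
    have "inverse (exp (real (k ^ 2 * n ^ 2) * (2 * x))) = exp (- 2 * x) ^ (k ^ 2 * n ^ 2)"
      by (metis exp_minus exp_of_nat_mult mult_minus_right mult.commute)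
    then show ?thesis unfolding y_exp x_exponent[symmetric] by simp
  qed
  also have "\<dots> \<le> y * (1 - x) ^ (k ^ 2 * n ^ 2) * (1 - y) ^ (n choose k)"
  proof -
    have "exp (- 2 * x) ^ (k ^ 2 * n ^ 2) \<le> (1 - x) ^ (k ^ 2 * n ^ 2)"
      using exp_neg_two_mult_le[OF x_bounds] by (intro power_mono) auto
    then show ?thesis
      by (intro mult_mono mult_left_mono) (use one_minus_y_power_ge_half x_bounds y_bounds in auto)
  qed
  finally show ?thesis .
qed

lemma lower_bound_if_n_choose_4_le:
  assumes "n choose 4 \<le> c * k ^ 2 * n ^ 2"
  shows "1/73984 * real n powr (6/5) / (log 2 (real n))\<^sup>2 \<le> real c"
proof -
  have L_pos: "L > 0" using L_ge_1 by simp
  have "(real n / real 4) ^ 4 \<le> real (n choose 4)"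
    using n_ge_8 by (intro binomial_ge_n_over_k_pow_k) auto
  also have "\<dots> \<le> real c * (real k)\<^sup>2 * (real n)\<^sup>2"
    using assms by (metis of_nat_le_iff of_nat_mult of_nat_power)
  also have "\<dots> \<le> real c * (17 * s * L)\<^sup>2 * (real n)\<^sup>2"
    using k_le by (intro mult_right_mono mult_left_mono power_mono) auto
  also have "\<dots> = (289 * real c * (s\<^sup>2 * L\<^sup>2)) * (real n)\<^sup>2"
    by (simp add: power_mult_distrib)
  finally have "(real n)\<^sup>2 / 256 * (real n)\<^sup>2 \<le> (289 * real c * (s\<^sup>2 * L\<^sup>2)) * (real n)\<^sup>2"
    by (simp add: power_divide eval_nat_numeral)
  then have "(real n)\<^sup>2 / 256 \<le> 289 * real c * (s\<^sup>2 * L\<^sup>2)"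
    by (rule mult_right_le_imp_le) (use n_pos in simp)
  then have main: "(real n)\<^sup>2 \<le> 73984 * real c * (s\<^sup>2 * L\<^sup>2)"
    by linarith
  have powr_eq: "real n powr (6/5) * s\<^sup>2 = (real n)\<^sup>2"
    unfolding s_def using n_pos by (simp add: powr_power powr_add[symmetric])
  have "L \<le> log 2 (real n)"
    using ln_2_less_1 L_pos unfolding log_def L_def by (simp add: le_divide_eq)
  then have "real n powr (6/5) / (log 2 (real n))\<^sup>2 \<le> real n powr (6/5) / L\<^sup>2"
    using L_pos by (intro divide_left_mono power_mono mult_pos_pos) auto
  also have "\<dots> = (real n)\<^sup>2 / (s\<^sup>2 * L\<^sup>2)"
    using s_ge_2 by (simp add: powr_eq[symmetric])
  also have "\<dots> \<le> 73984 * real c"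
    using main s_ge_2 L_pos by (simp add: divide_le_eq)
  finally show ?thesis by simp
qed

lemma exists_ramsey_graph:
  "\<exists>E \<subseteq> pairs {..<n}. (\<forall>Q \<subseteq> {..<n}. card Q = 4 \<longrightarrow> pairs Q \<inter> E \<noteq> {}) \<and>
    (\<forall>Q \<subseteq> {..<n}. card Q = k \<longrightarrow> \<not> pairs Q \<subseteq> E)"
proof (rule exists_graph_without_independent_4_sets_and_k_cliques)
  show "0 \<le> 1 - p" "1 - p \<le> 1" "0 \<le> x" "x < 1" "0 \<le> y" "y < 1"
    using p_bounds x_bounds y_bounds by auto
  show "(1 - (1 - p)) ^ 6 \<le>
      x * (1 - x) ^ (16 * card {..<n} ^ 2) * (1 - y) ^ (card {..<n} choose k)"
    using four_set_condition by simp
  show "(1 - p) ^ (k choose 2) \<le>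
      y * (1 - x) ^ (k ^ 2 * card {..<n} ^ 2) * (1 - y) ^ (card {..<n} choose k)"
    using k_set_condition by simp
qed (simp_all add: k_ne_4)

lemma exists_graph_with_large_clique_covers:
  "\<exists>E. simple_graph {..<n} E \<and> alpha {..<n} E \<le> 3 \<and>
     (\<forall>\<C>. is_clique_cover {..<n} E \<C> \<longrightarrow>
        real (card \<C>) \<ge> 1/73984 * real n powr (6/5) / (log 2 (real n))\<^sup>2)"
proof -
  obtain E where E: "E \<subseteq> pairs {..<n}"
    and four_sets: "\<And>Q. Q \<subseteq> {..<n} \<Longrightarrow> card Q = 4 \<Longrightarrow> pairs Q \<inter> E \<noteq> {}"
    and k_sets: "\<And>Q. Q \<subseteq> {..<n} \<Longrightarrow> card Q = k \<Longrightarrow> \<not> pairs Q \<subseteq> E"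
    using exists_ramsey_graph by blast
  show ?thesis
  proof (intro exI conjI allI impI)
    show "simple_graph {..<n} E" using E by (auto simp: simple_graph_def pairs_def)
    show "alpha {..<n} E \<le> 3" using alpha_less[of "{..<n}" 4 E] four_sets by simp
  next
    fix \<C> assume cover: "is_clique_cover {..<n} E \<C>"
    have "card X \<le> k" if "X \<in> \<C>" for X
      using card_clique_less[of "{..<n}" E X k] cover that k_sets
      by (auto simp: is_clique_cover_def)
    then have "card {..<n} choose 4 \<le> card \<C> * k ^ 2 * card {..<n} ^ 2"
      by (intro clique_cover_card_ge[OF _ cover four_sets]) auto
    then show "real (card \<C>) \<ge> 1/73984 * real n powr (6/5) / (log 2 (real n))\<^sup>2"
      by (intro lower_bound_if_n_choose_4_le) simp
  qed
qed

end

theorem mainTheorem1: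
  shows "\<exists>C::real. C > 0 \<and>
    infinite {n::nat. n > 0 \<and>
      (\<exists>E :: nat set set. simple_graph {..<n} E \<and> alpha {..<n} E \<le> 3 \<and>
         (\<forall>\<C>. is_clique_cover {..<n} E \<C> \<longrightarrow>
              real (card \<C>) \<ge> C * real n powr (6/5) / (log 2 (real n))^2))}"
  by (intro exI[of _ "1/73984"] conjI infinite_super[OF _ infinite_Ici[of 8]] subsetI CollectI
      ramsey_parameters.exists_graph_with_large_clique_covers ramsey_parameters.intro) auto

end
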